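(* Let $(\mathcal A,\mathcal B,\mathcal E)$ and $P$ be as in the context with $P(\mathcal A\cup\mathcal B)>0$, and let $(\mathcal A^+,\mathcal A^-,\mathcal B^+,\mathcal B^-,z)$ be any output of $\mathsf{LinOpt}(\mathcal A,\mathcal B,\mathcal E,P)$. Then: 1. $P(\mathcal A^+)P(\mathcal B^+)\ge P(\mathcal A^-)P(\mathcal B^-)$. 2. If $P(\mathcal A^+)P(\mathcal B^+)=P(\mathcal A^-)P(\mathcal B^-)$, then (a) $\mathbf 1^{\top}z=P(\mathcal A\cup\mathcal B)$; (b) $\frac{P(\mathcal A)}{P(\mathcal A\cup\mathcal B)}(M^{\top}z)_v=P(\{v\})$ for all $v\in\mathcal A$; (c) $\frac{P(\mathcal B)}{P(\mathcal A\cup\mathcal B)}(M^{\top}z)_v=P(\{v\})$ for all $v\in\mathcal B$.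
   Context: $\mathcal A,\mathcal B$ are disjoint finite sets, $\mathcal E\subseteq\mathcal A\times\mathcal B$, and $P:\mathcal A\cup\mathcal B\to[0,\infty)$ is a weight function with $P(S)=\sum_{v\in S}P(\{v\})$. Let $E\in\mathbb R^{\mathcal E\times(\mathcal A\cup\mathcal B)}$ be the edge incidence matrix of the bipartite graph ($E_{e,w}=1$ if $w$ is an endpoint of $e$, else $0$) and $M=\begin{pmatrix}E\\ I\end{pmatrix}$, rows indexed by $\mathcal E\sqcup(\mathcal A\cup\mathcal B)$. Define $r\in\mathbb R^{\mathcal A\cup\mathcal B}$ by: if $P(\mathcal A)>0$ and $P(\mathcal B)>0$, $r_v=P(\{v\})P(\mathcal A\cup\mathcal B)/P(\mathcal A)$ for $v\in\mathcal A$ and $r_v=P(\{v\})P(\mathcal A\cup\mathcal B)/P(\mathcal B)$ for $v\in\mathcal B$; otherwise $r_v=P(\{v\})$. $\mathsf{LinOpt}(\mathcal A,\mathcal B,\mathcal E,P)$ takes an optimal solution $y\in\{0,1\}^{\mathcal A\cup\mathcal B}$ of the linear program $\max r^{\top}y$ s.t. $y\ge\mathbf 0$, $My\le\mathbf 1$ (an integral optimum exists) and an optimal solution $z\in\mathbb R^{\mathcal E\sqcup(\mathcal A\cup\mathcal B)}$ of the dual program $\min\mathbf 1^{\top}z$ s.t. $z\ge\mathbf 0$, $M^{\top}z\ge r$, and returns $\mathcal A^+=\{v\in\mathcal A:y_v=1\}$, $\mathcal A^-=\mathcal A\setminus\mathcal A^+$, $\mathcal B^+=\{v\in\mathcal B:y_v=1\}$,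 $\mathcal B^-=\mathcal B\setminus\mathcal B^+$, and $z$. *)

theory Defs
  imports Complex_Main
begin

text \<open>P is the weight of single vertices; P(S) is sum P S.
  Vectors indexed by the vertex set are functions 'v \<Rightarrow> real (only values on A \<union> B matter);
  vectors indexed by E disjoint-union (A \<union> B) are functions ('v \<times> 'v) + 'v \<Rightarrow> real,
  Inl e for an edge row, Inr v for an identity row.\<close>

definition wvec :: "'v set \<Rightarrow> 'v set \<Rightarrow> ('v \<Rightarrow> real) \<Rightarrow> 'v \<Rightarrow> real" where
  "wvec A B P v =
     (if sum P A > 0 \<and> sum P B > 0 then
        (if v \<in> A then P v * sum P (A \<union> B) / sum P A
         else P v * sum P (A \<union> B) / sum P B)
      else P v)"

definition incid :: "'v \<times> 'v \<Rightarrow> 'v \<Rightarrow> real" where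
  "incid e w = (if w = fst e \<or> w = snd e then 1 else 0)"

text \<open>(M y)_row for M = (E; I).\<close>
definition Mvec :: "('v \<times> 'v) set \<Rightarrow> 'v set \<Rightarrow> ('v \<Rightarrow> real) \<Rightarrow> ('v \<times> 'v) + 'v \<Rightarrow> real" where
  "Mvec E V y row = (case row of
       Inl e \<Rightarrow> (\<Sum>w\<in>V. incid e w * y w)
     | Inr u \<Rightarrow> y u)"

definition MTvec :: "('v \<times> 'v) set \<Rightarrow> 'v set \<Rightarrow> (('v \<times> 'v) + 'v \<Rightarrow> real) \<Rightarrow> 'v \<Rightarrow> real" where
  "MTvec E V z v = (\<Sum>e\<in>E. incid e v * z (Inl e)) + (\<Sum>u\<in>V. (if u = v then 1 else 0) * z (Inr u))"

definition primal_feasible :: "('v \<times> 'v) set \<Rightarrow> 'v set \<Rightarrow> ('v \<Rightarrow> real) \<Rightarrow> bool" where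
  "primal_feasible E V y \<longleftrightarrow>
     (\<forall>v\<in>V. y v \<ge> 0) \<and> (\<forall>e\<in>E. Mvec E V y (Inl e) \<le> 1) \<and> (\<forall>v\<in>V. Mvec E V y (Inr v) \<le> 1)"

definition primal_obj :: "'v set \<Rightarrow> ('v \<Rightarrow> real) \<Rightarrow> ('v \<Rightarrow> real) \<Rightarrow> real" where
  "primal_obj V r y = (\<Sum>v\<in>V. r v * y v)"

definition primal_optimal :: "('v \<times> 'v) set \<Rightarrow> 'v set \<Rightarrow> ('v \<Rightarrow> real) \<Rightarrow> ('v \<Rightarrow> real) \<Rightarrow> bool" where
  "primal_optimal E V r y \<longleftrightarrow> primal_feasible E V y \<and>
     (\<forall>y'. primal_feasible E V y' \<longrightarrow> primal_obj V r y' \<le> primal_obj V r y)"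

definition dual_feasible :: "('v \<times> 'v) set \<Rightarrow> 'v set \<Rightarrow> ('v \<Rightarrow> real) \<Rightarrow> (('v \<times> 'v) + 'v \<Rightarrow> real) \<Rightarrow> bool" where
  "dual_feasible E V r z \<longleftrightarrow>
     (\<forall>e\<in>E. z (Inl e) \<ge> 0) \<and> (\<forall>v\<in>V. z (Inr v) \<ge> 0) \<and> (\<forall>v\<in>V. MTvec E V z v \<ge> r v)"

definition dual_obj :: "('v \<times> 'v) set \<Rightarrow> 'v set \<Rightarrow> (('v \<times> 'v) + 'v \<Rightarrow> real) \<Rightarrow> real" where
  "dual_obj E V z = (\<Sum>e\<in>E. z (Inl e)) + (\<Sum>v\<in>V. z (Inr v))"

definition dual_optimal :: "('v \<times> 'v) set \<Rightarrow> 'v set \<Rightarrow> ('v \<Rightarrow> real) \<Rightarrow> (('v \<times> 'v) + 'v \<Rightarrow> real) \<Rightarrow> bool" where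
  "dual_optimal E V r z \<longleftrightarrow> dual_feasible E V r z \<and>
     (\<forall>z'. dual_feasible E V r z' \<longrightarrow> dual_obj E V z \<le> dual_obj E V z')"

definition LinOpt_output ::
  "'v set \<Rightarrow> 'v set \<Rightarrow> ('v \<times> 'v) set \<Rightarrow> ('v \<Rightarrow> real) \<Rightarrow>
   'v set \<Rightarrow> 'v set \<Rightarrow> 'v set \<Rightarrow> 'v set \<Rightarrow> (('v \<times> 'v) + 'v \<Rightarrow> real) \<Rightarrow> bool" where
  "LinOpt_output A B E P Ap Am Bp Bm z \<longleftrightarrow>
     (\<exists>y. (\<forall>v\<in>A \<union> B. y v = 0 \<or> y v = 1) \<and>
          primal_optimal E (A \<union> B) (wvec A B P) y \<and>
          dual_optimal E (A \<union> B) (wvec A B P) z \<and>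
          Ap = {v\<in>A. y v = 1} \<and> Am = A - Ap \<and>
          Bp = {v\<in>B. y v = 1} \<and> Bm = B - Bp)"

end

theory Submission
  imports Defs
begin

text \<open>
  Write \<open>S = P(A \<union> B)\<close> and \<open>r = wvec A B P\<close>. If \<open>P(A), P(B) > 0\<close> then \<open>r(A) = r(B) = S\<close>, so
  the stable sets \<open>A\<close> and \<open>B\<close> show that the LP optimum is at least \<open>S\<close>. For the optimal stable set
  \<open>A\<^sup>+ \<union> B\<^sup>+\<close> the excess over \<open>S\<close> is \<open>S / (P(A) P(B)) \<cdot> (P(A\<^sup>+) P(B\<^sup>+) - P(A\<^sup>-) P(B\<^sup>-))\<close>,
  which gives the inequality, and in the equality case the LP optimum is exactly \<open>S\<close>. Then every
  stable set \<open>X \<union> (B - N(X))\<close> with \<open>X \<subseteq> A\<close> has weight at most \<open>S\<close>, i.e. \<open>r(X) \<le> r(N(X))\<close>; by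
  the weighted Hall theorem there is a fractional perfect matching between \<open>r|A\<close> and \<open>r|B\<close>, and
  its edge weights form a dual solution of value \<open>S\<close>. Hence the optimal dual \<open>z\<close> has value \<open>S\<close>,
  and complementary slackness against the primal solutions \<open>1\<^sub>A\<close> and \<open>1\<^sub>B\<close> forces
  \<open>M\<^sup>T z = r\<close> on \<open>A\<close> and on \<open>B\<close>. If \<open>P(A) P(B) = 0\<close> then \<open>r = P\<close> and \<open>z = P\<close> on the vertex rows
  is a dual solution of value \<open>S\<close>.

  The weighted Hall theorem is proved by induction: a tight proper subset splits the problem in
  two, and otherwise weight is pushed along an edge until a vertex weight vanishes or a set
  becomes tight.
\<close>

section \<open>The weighted Hall theorem\<close>

definition hall_condition :: "'a set \<Rightarrow> ('a \<times> 'b) set \<Rightarrow> ('a \<Rightarrow> real) \<Rightarrow> ('b \<Rightarrow> real) \<Rightarrow> bool" where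
  "hall_condition A E s c \<longleftrightarrow> (\<forall>X\<subseteq>A. sum s X \<le> sum c (E `` X))"

definition saturating_flow ::
  "'a set \<Rightarrow> 'b set \<Rightarrow> ('a \<times> 'b) set \<Rightarrow> ('a \<Rightarrow> real) \<Rightarrow> ('b \<Rightarrow> real) \<Rightarrow> ('a \<times> 'b \<Rightarrow> real) \<Rightarrow> bool" where
  "saturating_flow A B E s c f \<longleftrightarrow> (\<forall>e\<in>E. 0 \<le> f e) \<and>
     (\<forall>p\<in>A. sum f {e\<in>E. fst e = p} = s p) \<and> (\<forall>q\<in>B. sum f {e\<in>E. snd e = q} \<le> c q)"

lemma sum_fun_upd_add:
  fixes f :: "'a \<Rightarrow> real"
  shows "finite S \<Longrightarrow> sum (f(x := f x + t)) S = sum f S + (if x \<in> S then t else 0)"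
  by (induction S rule: finite_induct) (auto simp: algebra_simps)

lemma sum_fun_upd_diff:
  fixes f :: "'a \<Rightarrow> real"
  shows "finite S \<Longrightarrow> sum (f(x := f x - t)) S = sum f S - (if x \<in> S then t else 0)"
  by (induction S rule: finite_induct) (auto simp: algebra_simps)

lemma card_positive_mono:
  fixes s s' :: "'a \<Rightarrow> real"
  assumes "finite A" "A' \<subseteq> A" "\<forall>x\<in>A'. s' x \<le> s x"
  shows "card {x\<in>A'. 0 < s' x} \<le> card {x\<in>A. 0 < s x}"
  using assms by (intro card_mono) force+

lemma card_positive_less:
  fixes s s' :: "'a \<Rightarrow> real"
  assumes "finite A" "\<forall>x\<in>A. s' x \<le> s x" "x \<in> A" "0 < s x" "s' x \<le> 0"
  shows "card {x\<in>A. 0 < s' x} < card {x\<in>A. 0 < s x}"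
  using assms by (intro psubset_card_mono) force+

lemma saturating_flow_mono_edges:
  assumes f: "saturating_flow A B E' s c f" and "E' \<subseteq> E" "finite E"
  shows "saturating_flow A B E s c (\<lambda>e. if e \<in> E' then f e else 0)"
proof -
  have "(\<Sum>e\<in>{e\<in>E. R e}. if e \<in> E' then f e else 0) = sum f {e\<in>E'. R e}" for R
  proof -
    have "(\<Sum>e\<in>{e\<in>E. R e}. if e \<in> E' then f e else 0) = sum f ({e\<in>E. R e} \<inter> E')"
      using \<open>finite E\<close> by (simp add: sum.inter_restrict)
    also have "{e\<in>E. R e} \<inter> E' = {e\<in>E'. R e}" using \<open>E' \<subseteq> E\<close> by blast
    finally show ?thesis .
  qed
  then show ?thesis using f by (simp add: saturating_flow_def)
qed

lemma saturating_flow_Un: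
  assumes f1: "saturating_flow A1 B1 E1 s c f1" and f2: "saturating_flow A2 B2 E2 s c f2"
    and E1: "E1 \<subseteq> A1 \<times> B1" and E2: "E2 \<subseteq> A2 \<times> B2"
    and "A1 \<inter> A2 = {}" "B1 \<inter> B2 = {}"
  shows "saturating_flow (A1 \<union> A2) (B1 \<union> B2) (E1 \<union> E2) s c (\<lambda>e. if e \<in> E1 then f1 e else f2 e)"
proof -
  let ?f = "\<lambda>e. if e \<in> E1 then f1 e else f2 e"
  have on1: "sum ?f {e\<in>E1 \<union> E2. R e} = sum f1 {e\<in>E1. R e}" if "\<forall>e\<in>E2. \<not> R e" for R
    using that by (intro sum.cong) auto
  have on2: "sum ?f {e\<in>E1 \<union> E2. R e} = sum f2 {e\<in>E2. R e}" if "\<forall>e\<in>E1. \<not> R e" for R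
    using that by (intro sum.cong) auto
  show ?thesis
    unfolding saturating_flow_def
  proof (intro conjI ballI)
    fix p assume "p \<in> A1 \<union> A2"
    then show "sum ?f {e\<in>E1 \<union> E2. fst e = p} = s p"
      using on1[of "\<lambda>e. fst e = p"] on2[of "\<lambda>e. fst e = p"] f1 f2 assms
      unfolding saturating_flow_def by fastforce
  next
    fix q assume "q \<in> B1 \<union> B2"
    then show "sum ?f {e\<in>E1 \<union> E2. snd e = q} \<le> c q"
      using on1[of "\<lambda>e. snd e = q"] on2[of "\<lambda>e. snd e = q"] f1 f2 assms
      unfolding saturating_flow_def by fastforce
  qed (use f1 f2 in \<open>auto simp: saturating_flow_def\<close>)
qed

lemma saturating_flow_split:
  assumes "finite E" "E \<subseteq> A \<times> B" "X \<subseteq> A"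
    and f1: "saturating_flow X (E `` X) (E \<inter> X \<times> E `` X) s c f1"
    and f2: "saturating_flow (A - X) (B - E `` X) (E \<inter> (A - X) \<times> (B - E `` X)) s c f2"
  shows "\<exists>f. saturating_flow A B E s c f"
proof -
  let ?E1 = "E \<inter> X \<times> E `` X" and ?E2 = "E \<inter> (A - X) \<times> (B - E `` X)"
  have "saturating_flow (X \<union> (A - X)) (E `` X \<union> (B - E `` X)) (?E1 \<union> ?E2) s c
      (\<lambda>e. if e \<in> ?E1 then f1 e else f2 e)"
    using f1 f2 by (intro saturating_flow_Un) auto
  moreover have "X \<union> (A - X) = A" "E `` X \<union> (B - E `` X) = B" using assms by auto
  ultimately show ?thesis
    using saturating_flow_mono_edges[of A B "?E1 \<union> ?E2"] \<open>finite E\<close> by fastforce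
qed

lemma hall_condition_tight_restrict:
  assumes hall: "hall_condition A E s c" and "finite A" "finite B" "E \<subseteq> A \<times> B" "X \<subseteq> A"
    and tight: "sum c (E `` X) = sum s X"
  shows "hall_condition X (E \<inter> X \<times> E `` X) s c"
    and "hall_condition (A - X) (E \<inter> (A - X) \<times> (B - E `` X)) s c"
proof -
  show "hall_condition X (E \<inter> X \<times> E `` X) s c"
    unfolding hall_condition_def
  proof (intro allI impI)
    fix Z assume "Z \<subseteq> X"
    then have "(E \<inter> X \<times> E `` X) `` Z = E `` Z" by blast
    then show "sum s Z \<le> sum c ((E \<inter> X \<times> E `` X) `` Z)"
      using hall \<open>Z \<subseteq> X\<close> \<open>X \<subseteq> A\<close> unfolding hall_condition_def by auto
  qed
  show "hall_condition (A - X) (E \<inter> (A - X) \<times> (B - E `` X)) s c"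
    unfolding hall_condition_def
  proof (intro allI impI)
    fix Z assume Z: "Z \<subseteq> A - X"
    have fin: "finite Z" "finite X" "finite (E `` Z - E `` X)" "finite (E `` X)"
      using Z assms by (auto intro: finite_subset)
    have "Z \<inter> X = {}" using Z by blast
    then have "sum s Z + sum s X = sum s (Z \<union> X)"
      using fin by (simp add: sum.union_disjoint)
    also have "\<dots> \<le> sum c (E `` (Z \<union> X))"
      using hall Z \<open>X \<subseteq> A\<close> unfolding hall_condition_def by (meson Diff_subset le_sup_iff order_trans)
    also have "E `` (Z \<union> X) = (E `` Z - E `` X) \<union> E `` X" by auto
    also have "sum c \<dots> = sum c (E `` Z - E `` X) + sum c (E `` X)"
      using fin by (intro sum.union_disjoint) auto
    also have "E `` Z - E `` X = (E \<inter> (A - X) \<times> (B - E `` X)) `` Z" using Z assms by auto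
    finally show "sum s Z \<le> sum c ((E \<inter> (A - X) \<times> (B - E `` X)) `` Z)" using tight by simp
  qed
qed

lemma hall_condition_push:
  assumes hall: "hall_condition A E s c" and "finite A" "finite B" "E \<subseteq> A \<times> B"
    and "(p, q) \<in> E" and slack: "\<forall>X\<subseteq>A - {p}. q \<in> E `` X \<longrightarrow> t \<le> sum c (E `` X) - sum s X"
  shows "hall_condition A E (s(p := s p - t)) (c(q := c q - t))"
  unfolding hall_condition_def
proof (intro allI impI)
  fix X assume X: "X \<subseteq> A"
  have fin: "finite X" "finite (E `` X)" using X assms by (auto intro: finite_subset)
  have "sum s X \<le> sum c (E `` X)" using hall X unfolding hall_condition_def by blast
  moreover have "p \<in> X \<Longrightarrow> q \<in> E `` X" using \<open>(p, q) \<in> E\<close> by blast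
  moreover have "p \<notin> X \<Longrightarrow> q \<in> E `` X \<Longrightarrow> t \<le> sum c (E `` X) - sum s X" using slack X by blast
  moreover have "sum (s(p := s p - t)) X = sum s X - (if p \<in> X then t else 0)"
    and "sum (c(q := c q - t)) (E `` X) = sum c (E `` X) - (if q \<in> E `` X then t else 0)"
    using fin by (simp_all only: sum_fun_upd_diff)
  ultimately show "sum (s(p := s p - t)) X \<le> sum (c(q := c q - t)) (E `` X)"
    by (cases "p \<in> X"; cases "q \<in> E `` X") auto
qed

lemma saturating_flow_push:
  assumes f: "saturating_flow A B E (s(p := s p - t)) (c(q := c q - t)) f"
    and "(p, q) \<in> E" "finite E" "0 \<le> t"
  shows "saturating_flow A B E s c (f((p, q) := f (p, q) + t))"
proof -
  have "sum (f((p, q) := f (p, q) + t)) {e\<in>E. R e} = sum f {e\<in>E. R e} + (if R (p, q) then t else 0)"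
    for R using \<open>finite E\<close> \<open>(p, q) \<in> E\<close> by (subst sum_fun_upd_add) auto
  then show ?thesis using assms unfolding saturating_flow_def
    by (auto split: if_splits)
qed

lemma saturating_flow_of_tight_set:
  assumes "finite A" "finite B" "E \<subseteq> A \<times> B" "hall_condition A E s c"
    and X: "X \<subseteq> A" "X \<noteq> {}" "X \<noteq> A" "sum c (E `` X) = sum s X"
    and smaller: "\<And>A' B' E'. A' \<subset> A \<Longrightarrow> B' \<subseteq> B \<Longrightarrow> E' \<subseteq> A' \<times> B' \<Longrightarrow>
      hall_condition A' E' s c \<Longrightarrow> \<exists>f. saturating_flow A' B' E' s c f"
  shows "\<exists>f. saturating_flow A B E s c f"
proof -
  have hall1: "hall_condition X (E \<inter> X \<times> E `` X) s c"
    and hall2: "hall_condition (A - X) (E \<inter> (A - X) \<times> (B - E `` X)) s c"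
    using hall_condition_tight_restrict[OF assms(4,1,2,3) X(1,4)] by auto
  have "X \<subset> A" "E `` X \<subseteq> B" "A - X \<subset> A" using assms X by auto
  then obtain f1 f2 where
    "saturating_flow X (E `` X) (E \<inter> X \<times> E `` X) s c f1"
    "saturating_flow (A - X) (B - E `` X) (E \<inter> (A - X) \<times> (B - E `` X)) s c f2"
    using smaller[OF _ _ _ hall1] smaller[OF _ _ _ hall2] by (meson Diff_subset Int_lower2)
  moreover have "finite E" using assms by (auto intro: finite_subset)
  ultimately show ?thesis using saturating_flow_split assms(3) X(1) by blast
qed

lemma exists_hall_push:
  assumes fA: "finite A" and fB: "finite B" and EAB: "E \<subseteq> A \<times> B" and hall: "hall_condition A E s c"
    and no_tight: "\<forall>X\<subseteq>A. X \<noteq> {} \<longrightarrow> X \<noteq> A \<longrightarrow> sum c (E `` X) \<noteq> sum s X"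
    and p: "p \<in> A" "0 < s p"
  obtains q t where "(p, q) \<in> E" "0 < t" "t \<le> s p" "t \<le> c q"
    and "hall_condition A E (s(p := s p - t)) (c(q := c q - t))"
    and "t = s p \<or> t = c q \<or>
      (\<exists>X\<subseteq>A. X \<noteq> {} \<and> X \<noteq> A \<and> sum (c(q := c q - t)) (E `` X) = sum (s(p := s p - t)) X)"
proof -
  have "s p \<le> sum c (E `` {p})" using hall p unfolding hall_condition_def by force
  then have "\<not> (\<forall>q\<in>E `` {p}. c q \<le> 0)" using p sum_nonpos[of "E `` {p}" c] by fastforce
  then obtain q where pq: "(p, q) \<in> E" and q: "0 < c q" by auto
  define slack where "slack X = sum c (E `` X) - sum s X" for X
  define T where "T = insert (s p) (insert (c q) (slack ` {X. X \<subseteq> A - {p} \<and> q \<in> E `` X}))"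
  \<comment> \<open>the largest amount that can be pushed along (p, q) without violating Hall's condition\<close>
  define t where "t = Min T"
  have "finite T" unfolding T_def using fA by simp
  then have t_le: "t \<le> u" if "u \<in> T" for u using that unfolding t_def by simp
  have "t \<in> T" unfolding t_def using \<open>finite T\<close> by (intro Min_in) (auto simp: T_def)
  then have t_cases: "t = s p \<or> t = c q \<or> (\<exists>X. X \<subseteq> A - {p} \<and> q \<in> E `` X \<and> t = slack X)"
    unfolding T_def by auto
  have slack_pos: "0 < slack X" if X: "X \<subseteq> A - {p}" "q \<in> E `` X" for X
  proof -
    have "X \<subseteq> A" "X \<noteq> {}" "X \<noteq> A" using X p by auto
    then have "sum s X \<le> sum c (E `` X)" "sum c (E `` X) \<noteq> sum s X"
      using hall no_tight unfolding hall_condition_def by auto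
    then show ?thesis unfolding slack_def by simp
  qed
  have tight: "\<exists>X\<subseteq>A. X \<noteq> {} \<and> X \<noteq> A \<and> sum (c(q := c q - t)) (E `` X) = sum (s(p := s p - t)) X"
    if X: "X \<subseteq> A - {p}" "q \<in> E `` X" "t = slack X" for X
  proof -
    have "finite (E `` X)" using EAB fB by (auto intro: finite_subset)
    then have "sum (c(q := c q - t)) (E `` X) = sum c (E `` X) - t" using X by (subst sum_fun_upd_diff) auto
    moreover have "sum (s(p := s p - t)) X = sum s X" using X by (intro sum.cong) auto
    ultimately have "sum (c(q := c q - t)) (E `` X) = sum (s(p := s p - t)) X"
      using X unfolding slack_def by simp
    moreover have "X \<subseteq> A" "X \<noteq> {}" "X \<noteq> A" using X p by auto
    ultimately show ?thesis by blast
  qed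
  have "\<forall>X\<subseteq>A - {p}. q \<in> E `` X \<longrightarrow> t \<le> sum c (E `` X) - sum s X"
    using t_le unfolding T_def slack_def by blast
  then have hall': "hall_condition A E (s(p := s p - t)) (c(q := c q - t))"
    by (rule hall_condition_push[OF hall fA fB EAB pq])
  have "0 < t" using t_cases slack_pos p q by auto
  moreover have "t \<le> s p" "t \<le> c q" using t_le unfolding T_def by simp_all
  moreover have "t = s p \<or> t = c q \<or>
      (\<exists>X\<subseteq>A. X \<noteq> {} \<and> X \<noteq> A \<and> sum (c(q := c q - t)) (E `` X) = sum (s(p := s p - t)) X)"
    using t_cases tight by blast
  ultimately show ?thesis using that[OF pq _ _ _ hall'] by blast
qed

theorem saturating_flow_exists:
  assumes "finite A" "finite B" "E \<subseteq> A \<times> B"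
    and "\<forall>p\<in>A. 0 \<le> s p" "\<forall>q\<in>B. 0 \<le> c q" "hall_condition A E s c"
  shows "\<exists>f. saturating_flow A B E s c f"
  using assms
proof (induction "card A + card {p\<in>A. 0 < s p} + card {q\<in>B. 0 < c q}"
    arbitrary: A B E s c rule: less_induct)
  case less
  note fA = \<open>finite A\<close> and fB = \<open>finite B\<close> and EAB = \<open>E \<subseteq> A \<times> B\<close>
    and s_nonneg = \<open>\<forall>p\<in>A. 0 \<le> s p\<close> and c_nonneg = \<open>\<forall>q\<in>B. 0 \<le> c q\<close>
    and hall = \<open>hall_condition A E s c\<close>
  have smaller_weights: "\<exists>f. saturating_flow A B E s' c' f"
    if "\<forall>p\<in>A. 0 \<le> s' p" "\<forall>q\<in>B. 0 \<le> c' q" "\<forall>p\<in>A. s' p \<le> s p" "\<forall>q\<in>B. c' q \<le> c q"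
      and "hall_condition A E s' c'"
      and "(\<exists>X\<subseteq>A. X \<noteq> {} \<and> X \<noteq> A \<and> sum c' (E `` X) = sum s' X)
        \<or> card {p\<in>A. 0 < s' p} + card {q\<in>B. 0 < c' q} < card {p\<in>A. 0 < s p} + card {q\<in>B. 0 < c q}"
    for s' c'
    using that(6)
  proof (elim disjE exE conjE)
    fix X assume X: "X \<subseteq> A" "X \<noteq> {}" "X \<noteq> A" "sum c' (E `` X) = sum s' X"
    show ?thesis
    proof (rule saturating_flow_of_tight_set[OF fA fB EAB that(5) X])
      fix A' B' E' assume A': "A' \<subset> A" and B': "B' \<subseteq> B" and "E' \<subseteq> A' \<times> B'" "hall_condition A' E' s' c'"
      moreover have "card A' < card A" using A' fA by (rule psubset_card_mono[rotated])
      moreover have "card {p\<in>A'. 0 < s' p} \<le> card {p\<in>A. 0 < s p}"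
        using A' that(3) fA by (intro card_positive_mono) auto
      moreover have "card {q\<in>B'. 0 < c' q} \<le> card {q\<in>B. 0 < c q}"
        using B' that(4) fB by (intro card_positive_mono) auto
      moreover have "finite A'" "finite B'" using A' B' fA fB by (auto intro: finite_subset)
      ultimately show "\<exists>f. saturating_flow A' B' E' s' c' f"
        using A' B' that(1,2) by (intro less.hyps) auto
    qed
  next
    assume "card {p\<in>A. 0 < s' p} + card {q\<in>B. 0 < c' q} < card {p\<in>A. 0 < s p} + card {q\<in>B. 0 < c q}"
    then show ?thesis using less.hyps fA fB EAB that(1,2,5) by simp
  qed
  consider "\<exists>X\<subseteq>A. X \<noteq> {} \<and> X \<noteq> A \<and> sum c (E `` X) = sum s X" | "\<forall>p\<in>A. s p = 0"
    | p where "\<forall>X\<subseteq>A. X \<noteq> {} \<longrightarrow> X \<noteq> A \<longrightarrow> sum c (E `` X) \<noteq> sum s X" "p \<in> A" "0 < s p"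
    using s_nonneg by (metis less_eq_real_def)
  then show ?case
  proof cases
    case 1
    then show ?thesis using smaller_weights s_nonneg c_nonneg hall by blast
  next
    case 2
    then have "saturating_flow A B E s c (\<lambda>_. 0)" using c_nonneg unfolding saturating_flow_def by auto
    then show ?thesis by blast
  next
    case 3
    obtain q t where pq: "(p, q) \<in> E" and t: "0 < t" "t \<le> s p" "t \<le> c q"
      and hall': "hall_condition A E (s(p := s p - t)) (c(q := c q - t))"
      and progress: "t = s p \<or> t = c q \<or> (\<exists>X\<subseteq>A. X \<noteq> {} \<and> X \<noteq> A \<and>
        sum (c(q := c q - t)) (E `` X) = sum (s(p := s p - t)) X)"
      by (rule exists_hall_push[OF fA fB EAB hall 3])
    have q: "q \<in> B" using pq EAB by blast
    have fewer_s: "card {x\<in>A. 0 < (s(p := s p - t)) x} \<le> card {p\<in>A. 0 < s p}"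
      and fewer_c: "card {x\<in>B. 0 < (c(q := c q - t)) x} \<le> card {q\<in>B. 0 < c q}"
      using fA fB t by (intro card_positive_mono; simp)+
    have "\<exists>f. saturating_flow A B E (s(p := s p - t)) (c(q := c q - t)) f"
    proof (rule smaller_weights[OF _ _ _ _ hall'])
      show "\<forall>p'\<in>A. 0 \<le> (s(p := s p - t)) p'" "\<forall>q'\<in>B. 0 \<le> (c(q := c q - t)) q'"
        using s_nonneg c_nonneg t by auto
      show "\<forall>p'\<in>A. (s(p := s p - t)) p' \<le> s p'" "\<forall>q'\<in>B. (c(q := c q - t)) q' \<le> c q'"
        using t by auto
      show "(\<exists>X\<subseteq>A. X \<noteq> {} \<and> X \<noteq> A \<and> sum (c(q := c q - t)) (E `` X) = sum (s(p := s p - t)) X) \<or>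
        card {x\<in>A. 0 < (s(p := s p - t)) x} + card {x\<in>B. 0 < (c(q := c q - t)) x}
          < card {p\<in>A. 0 < s p} + card {q\<in>B. 0 < c q}"
        using progress
      proof (elim disjE)
        assume "t = s p"
        then have "card {x\<in>A. 0 < (s(p := s p - t)) x} < card {p\<in>A. 0 < s p}"
          using fA 3 t by (intro card_positive_less) auto
        then show ?thesis using fewer_c by linarith
      next
        assume "t = c q"
        then have "card {x\<in>B. 0 < (c(q := c q - t)) x} < card {q\<in>B. 0 < c q}"
          using fB q t by (intro card_positive_less) auto
        then show ?thesis using fewer_s by linarith
      qed blast
    qed
    then obtain f where "saturating_flow A B E (s(p := s p - t)) (c(q := c q - t)) f" by blast
    moreover have "finite E" using fA fB EAB by (auto intro: finite_subset)
    ultimately show ?thesis using saturating_flow_push[OF _ pq] t by (meson less_imp_le)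
  qed
qed

section \<open>Weak duality and complementary slackness\<close>

lemma MTvec_eq:
  assumes "finite V" "v \<in> V"
  shows "MTvec E V z v = (\<Sum>e\<in>E. incid e v * z (Inl e)) + z (Inr v)"
proof -
  have "(\<Sum>u\<in>V. (if u = v then 1 else 0) * z (Inr u)) = (\<Sum>u\<in>V. if u = v then z (Inr u) else 0)"
    by (rule sum.cong) auto
  then show ?thesis using assms by (simp add: MTvec_def sum.delta)
qed

lemma Mvec_Inl_eq:
  assumes "finite V" "fst e \<in> V" "snd e \<in> V" "fst e \<noteq> snd e"
  shows "Mvec E V y (Inl e) = y (fst e) + y (snd e)"
proof -
  have "(\<Sum>w\<in>V. incid e w * y w) = (\<Sum>w\<in>V. (if w = fst e then y w else 0) + (if w = snd e then y w else 0))"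
    using assms(4) by (intro sum.cong) (auto simp: incid_def)
  then show ?thesis using assms by (simp add: Mvec_def sum.distrib sum.delta)
qed

lemma primal_obj_le_sum_MTvec:
  assumes "primal_feasible E V y" "dual_feasible E V r z"
  shows "primal_obj V r y \<le> (\<Sum>v\<in>V. MTvec E V z v * y v)"
  unfolding primal_obj_def using assms
  by (intro sum_mono mult_right_mono) (auto simp: primal_feasible_def dual_feasible_def)

lemma sum_MTvec_le_dual_obj:
  assumes "finite V" "primal_feasible E V y" "dual_feasible E V r z"
  shows "(\<Sum>v\<in>V. MTvec E V z v * y v) \<le> dual_obj E V z"
proof -
  have "(\<Sum>v\<in>V. MTvec E V z v * y v) =
      (\<Sum>v\<in>V. (\<Sum>e\<in>E. incid e v * z (Inl e)) * y v) + (\<Sum>v\<in>V. z (Inr v) * y v)"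
    using assms(1) by (simp add: MTvec_eq distrib_right sum.distrib)
  also have "(\<Sum>v\<in>V. (\<Sum>e\<in>E. incid e v * z (Inl e)) * y v) = (\<Sum>e\<in>E. z (Inl e) * Mvec E V y (Inl e))"
    unfolding Mvec_def by (simp add: sum_distrib_right sum_distrib_left sum.swap[of _ V E] mult_ac)
  also have "(\<Sum>e\<in>E. z (Inl e) * Mvec E V y (Inl e)) + (\<Sum>v\<in>V. z (Inr v) * y v)
      \<le> (\<Sum>e\<in>E. z (Inl e)) + (\<Sum>v\<in>V. z (Inr v))"
  proof (intro add_mono sum_mono)
    show "z (Inl e) * Mvec E V y (Inl e) \<le> z (Inl e)" if "e \<in> E" for e
      using that assms(2,3) by (intro mult_left_le) (auto simp: primal_feasible_def dual_feasible_def)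
    show "z (Inr v) * y v \<le> z (Inr v)" if "v \<in> V" for v
      using that assms(2,3) by (intro mult_left_le) (auto simp: primal_feasible_def dual_feasible_def Mvec_def)
  qed
  finally show ?thesis unfolding dual_obj_def .
qed

lemma weak_duality:
  assumes "finite V" "primal_feasible E V y" "dual_feasible E V r z"
  shows "primal_obj V r y \<le> dual_obj E V z"
  using primal_obj_le_sum_MTvec[OF assms(2,3)] sum_MTvec_le_dual_obj[OF assms] by linarith

lemma complementary_slackness:
  assumes "finite V" and y: "primal_feasible E V y" and z: "dual_feasible E V r z"
    and "dual_obj E V z \<le> primal_obj V r y" and "v \<in> V" "y v \<noteq> 0"
  shows "MTvec E V z v = r v"
proof -
  define slack where "slack w = (MTvec E V z w - r w) * y w" for w
  have nonneg: "\<And>w. w \<in> V \<Longrightarrow> 0 \<le> slack w"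
    using y z by (auto simp: slack_def primal_feasible_def dual_feasible_def)
  have "sum slack V = (\<Sum>w\<in>V. MTvec E V z w * y w) - primal_obj V r y"
    unfolding slack_def primal_obj_def by (simp add: left_diff_distrib sum_subtractf)
  also have "\<dots> \<le> 0" using sum_MTvec_le_dual_obj[OF assms(1-3)] assms(4) by linarith
  finally have "sum slack V \<le> 0" .
  moreover have "0 \<le> sum slack V" using nonneg by (rule sum_nonneg)
  ultimately have "sum slack V = 0" by linarith
  then have "slack v = 0"
    using sum_nonneg_eq_0_iff[of V slack] \<open>finite V\<close> nonneg \<open>v \<in> V\<close> by simp
  then show ?thesis using \<open>y v \<noteq> 0\<close> by (simp add: slack_def)
qed

lemma primal_obj_indicator:
  assumes "finite V" "I \<subseteq> V"
  shows "primal_obj V r (\<lambda>v. if v \<in> I then 1 else 0) = sum r I"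
proof -
  have "primal_obj V r (\<lambda>v. if v \<in> I then 1 else 0) = (\<Sum>v\<in>V. if v \<in> I then r v else 0)"
    unfolding primal_obj_def by (intro sum.cong) auto
  also have "\<dots> = sum r (V \<inter> I)" using assms by (simp add: sum.inter_restrict)
  finally show ?thesis using assms by (simp add: Int_absorb1)
qed

section \<open>Bipartite stable set programs\<close>

locale bipartite_graph =
  fixes A B :: "'v set" and E :: "('v \<times> 'v) set"
  assumes finite_A: "finite A" and finite_B: "finite B"
    and disjoint: "A \<inter> B = {}" and edges: "E \<subseteq> A \<times> B"
begin

lemma finite_E: "finite E"
  using finite_A finite_B edges by (auto intro: finite_subset)

lemma primal_feasible_indicator:
  assumes "\<forall>e\<in>E. \<not> (fst e \<in> I \<and> snd e \<in> I)"
  shows "primal_feasible E (A \<union> B) (\<lambda>v. if v \<in> I then 1 else 0)"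
  unfolding primal_feasible_def
proof (intro conjI ballI)
  fix e assume e: "e \<in> E"
  then have "fst e \<in> A" "snd e \<in> B" using edges by auto
  then have "Mvec E (A \<union> B) (\<lambda>v. if v \<in> I then 1 else 0) (Inl e) =
      (if fst e \<in> I then 1 else 0) + (if snd e \<in> I then 1 else 0)"
    using disjoint finite_A finite_B by (intro Mvec_Inl_eq) auto
  then show "Mvec E (A \<union> B) (\<lambda>v. if v \<in> I then 1 else 0) (Inl e) \<le> 1" using assms e by auto
qed (auto simp: Mvec_def)

lemma sum_incid_A:
  assumes "v \<in> A"
  shows "(\<Sum>e\<in>E. incid e v * f e) = sum f {e\<in>E. fst e = v}"
proof -
  have "(\<Sum>e\<in>E. incid e v * f e) = (\<Sum>e\<in>E. if fst e = v then f e else 0)"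
    using assms edges disjoint by (intro sum.cong) (auto simp: incid_def)
  then show ?thesis using finite_E by (simp add: sum.inter_filter)
qed

lemma sum_incid_B:
  assumes "v \<in> B"
  shows "(\<Sum>e\<in>E. incid e v * f e) = sum f {e\<in>E. snd e = v}"
proof -
  have "(\<Sum>e\<in>E. incid e v * f e) = (\<Sum>e\<in>E. if snd e = v then f e else 0)"
    using assms edges disjoint by (intro sum.cong) (auto simp: incid_def)
  then show ?thesis using finite_E by (simp add: sum.inter_filter)
qed

lemma primal_feasible_indicator_A: "primal_feasible E (A \<union> B) (\<lambda>v. if v \<in> A then 1 else 0)"
  using edges disjoint by (intro primal_feasible_indicator) auto

lemma primal_feasible_indicator_B: "primal_feasible E (A \<union> B) (\<lambda>v. if v \<in> B then 1 else 0)"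
  using edges disjoint by (intro primal_feasible_indicator) auto

lemma primal_obj_zero_one:
  assumes "\<forall>v\<in>A \<union> B. y v = 0 \<or> y v = 1"
  shows "primal_obj (A \<union> B) r y = sum r {v\<in>A. y v = 1} + sum r {v\<in>B. y v = 1}"
proof -
  have "primal_obj (A \<union> B) r y = primal_obj (A \<union> B) r (\<lambda>v. if v \<in> {v\<in>A. y v = 1} \<union> {v\<in>B. y v = 1} then 1 else 0)"
    unfolding primal_obj_def using assms by (intro sum.cong) auto
  also have "\<dots> = sum r ({v\<in>A. y v = 1} \<union> {v\<in>B. y v = 1})"
    using finite_A finite_B by (intro primal_obj_indicator) auto
  also have "\<dots> = sum r {v\<in>A. y v = 1} + sum r {v\<in>B. y v = 1}"
    using finite_A finite_B disjoint by (intro sum.union_disjoint) auto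
  finally show ?thesis .
qed

lemma saturating_flow_saturates_B:
  assumes f: "saturating_flow A B E s c f" and balanced: "sum s A = sum c B"
  shows "\<forall>q\<in>B. sum f {e\<in>E. snd e = q} = c q"
proof -
  have total_out: "(\<Sum>p\<in>A. sum f {e\<in>E. fst e = p}) = sum f E"
    and total_in: "(\<Sum>q\<in>B. sum f {e\<in>E. snd e = q}) = sum f E"
    using finite_A finite_B finite_E edges by (intro sum.group; force)+
  define deficit where "deficit q = c q - sum f {e\<in>E. snd e = q}" for q
  have "sum deficit B = 0"
    using f balanced total_out total_in
    by (simp add: deficit_def sum_subtractf saturating_flow_def)
  moreover have "\<And>q. q \<in> B \<Longrightarrow> 0 \<le> deficit q" using f by (simp add: deficit_def saturating_flow_def)
  ultimately show ?thesis using sum_nonneg_eq_0_iff[of B deficit] finite_B by (simp add: deficit_def)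
qed

lemma dual_feasible_of_flow:
  assumes f: "saturating_flow A B E r r f" and balanced: "sum r A = sum r B"
  shows "dual_feasible E (A \<union> B) r (case_sum f (\<lambda>_. 0))"
    and "dual_obj E (A \<union> B) (case_sum f (\<lambda>_. 0)) = sum r A"
proof -
  have "MTvec E (A \<union> B) (case_sum f (\<lambda>_. 0)) v = r v" if "v \<in> A \<union> B" for v
  proof -
    have "MTvec E (A \<union> B) (case_sum f (\<lambda>_. 0)) v = (\<Sum>e\<in>E. incid e v * f e)"
      using that finite_A finite_B by (simp add: MTvec_eq)
    then show ?thesis
      using that f saturating_flow_saturates_B[OF f balanced] sum_incid_A sum_incid_B
      unfolding saturating_flow_def by auto
  qed
  then show "dual_feasible E (A \<union> B) r (case_sum f (\<lambda>_. 0))"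
    using f unfolding dual_feasible_def saturating_flow_def by auto
  have "(\<Sum>p\<in>A. sum f {e\<in>E. fst e = p}) = sum f E"
    using finite_A finite_E edges by (intro sum.group) auto
  then show "dual_obj E (A \<union> B) (case_sum f (\<lambda>_. 0)) = sum r A"
    using f unfolding dual_obj_def saturating_flow_def by simp
qed

lemma hall_condition_of_primal_bound:
  assumes bound: "\<forall>y. primal_feasible E (A \<union> B) y \<longrightarrow> primal_obj (A \<union> B) r y \<le> sum r B"
  shows "hall_condition A E r r"
  unfolding hall_condition_def
proof (intro allI impI)
  fix X assume X: "X \<subseteq> A"
  define I where "I = X \<union> (B - E `` X)"
  have N: "E `` X \<subseteq> B" using edges by blast
  have "\<forall>e\<in>E. \<not> (fst e \<in> I \<and> snd e \<in> I)"
  proof (intro ballI notI)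
    fix e assume "e \<in> E" "fst e \<in> I \<and> snd e \<in> I"
    moreover from \<open>e \<in> E\<close> have "fst e \<in> A" "snd e \<in> B" using edges by auto
    ultimately have "fst e \<in> X" "snd e \<notin> E `` X" using X disjoint unfolding I_def by auto
    then show False using \<open>e \<in> E\<close> by (metis ImageI prod.collapse)
  qed
  then have "primal_obj (A \<union> B) r (\<lambda>v. if v \<in> I then 1 else 0) \<le> sum r B"
    using bound primal_feasible_indicator by blast
  moreover have "primal_obj (A \<union> B) r (\<lambda>v. if v \<in> I then 1 else 0) = sum r I"
    using X finite_A finite_B unfolding I_def by (intro primal_obj_indicator) auto
  moreover have "sum r I = sum r X + sum r (B - E `` X)"
    unfolding I_def using X disjoint finite_A finite_B
    by (intro sum.union_disjoint) (auto intro: finite_subset)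
  moreover have "sum r (B - E `` X) = sum r B - sum r (E `` X)"
    using N finite_B by (simp add: sum_diff finite_subset)
  ultimately show "sum r X \<le> sum r (E `` X)" by linarith
qed

lemma dual_attaining_primal_bound:
  assumes "\<forall>v\<in>A \<union> B. 0 \<le> r v" and "sum r A = sum r B"
    and "\<forall>y. primal_feasible E (A \<union> B) y \<longrightarrow> primal_obj (A \<union> B) r y \<le> sum r B"
  shows "\<exists>z. dual_feasible E (A \<union> B) r z \<and> dual_obj E (A \<union> B) z = sum r B"
proof -
  have "\<forall>p\<in>A. 0 \<le> r p" "\<forall>q\<in>B. 0 \<le> r q" using assms(1) by auto
  then obtain f where "saturating_flow A B E r r f"
    using saturating_flow_exists[OF finite_A finite_B edges] hall_condition_of_primal_bound[OF assms(3)]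
    by blast
  from dual_feasible_of_flow[OF this assms(2)] show ?thesis using assms(2) by auto
qed

end

section \<open>The \<open>LinOpt\<close> weights\<close>

locale weighted_bipartite_graph = bipartite_graph A B E for A B :: "'v set" and E +
  fixes P :: "'v \<Rightarrow> real"
  assumes P_nonneg: "\<forall>v\<in>A \<union> B. 0 \<le> P v" and total_pos: "0 < sum P (A \<union> B)"
begin

lemma sum_P_union: "sum P (A \<union> B) = sum P A + sum P B"
  using finite_A finite_B disjoint by (rule sum.union_disjoint)

lemma sum_P_nonneg: "X \<subseteq> A \<union> B \<Longrightarrow> 0 \<le> sum P X"
  using P_nonneg by (intro sum_nonneg) auto

lemma P_eq_0_if_not_sum_pos:
  assumes "X \<subseteq> A \<union> B" "v \<in> X" "\<not> 0 < sum P X"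
  shows "P v = 0"
proof -
  have "P v \<le> sum P X"
    using assms P_nonneg finite_A finite_B by (intro member_le_sum) (auto intro: finite_subset)
  then show ?thesis using assms P_nonneg by force
qed

lemma wvec_nonneg: "v \<in> A \<union> B \<Longrightarrow> 0 \<le> wvec A B P v"
  using P_nonneg total_pos by (auto simp: wvec_def)

lemma sum_wvec_subset_A:
  assumes "X \<subseteq> A" "0 < sum P A" "0 < sum P B"
  shows "sum (wvec A B P) X = sum P X * sum P (A \<union> B) / sum P A"
  using assms by (simp add: wvec_def sum_divide_distrib sum_distrib_right subset_iff cong: sum.cong)

lemma sum_wvec_subset_B:
  assumes "X \<subseteq> B" "0 < sum P A" "0 < sum P B"
  shows "sum (wvec A B P) X = sum P X * sum P (A \<union> B) / sum P B"
proof -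
  have "\<forall>v\<in>X. v \<notin> A" using assms(1) disjoint by blast
  then show ?thesis using assms by (simp add: wvec_def sum_divide_distrib sum_distrib_right cong: sum.cong)
qed

lemma sum_wvec_A:
  assumes "0 < sum P A"
  shows "sum (wvec A B P) A = sum P (A \<union> B)"
proof (cases "0 < sum P B")
  case True
  then show ?thesis using sum_wvec_subset_A[of A] assms by simp
next
  case False
  then have "sum P B = 0" using sum_P_nonneg[of B] by simp
  then show ?thesis using False sum_P_union by (simp add: wvec_def)
qed

lemma sum_wvec_B:
  assumes "0 < sum P B"
  shows "sum (wvec A B P) B = sum P (A \<union> B)"
proof (cases "0 < sum P A")
  case True
  then show ?thesis using sum_wvec_subset_B[of B] assms by simp
next
  case False
  then have "sum P A = 0" using sum_P_nonneg[of A] by simp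
  then show ?thesis using False sum_P_union by (simp add: wvec_def)
qed

lemma scaled_wvec_A:
  assumes "v \<in> A"
  shows "sum P A / sum P (A \<union> B) * wvec A B P v = P v"
proof (cases "0 < sum P A")
  case True
  then show ?thesis
    using assms total_pos sum_P_union sum_P_nonneg[of B] by (auto simp: wvec_def)
next
  case False
  then show ?thesis using P_eq_0_if_not_sum_pos[of A] assms sum_P_nonneg[of A] by simp
qed

lemma scaled_wvec_B:
  assumes "v \<in> B"
  shows "sum P B / sum P (A \<union> B) * wvec A B P v = P v"
proof (cases "0 < sum P B")
  case True
  have "v \<notin> A" using assms disjoint by blast
  then show ?thesis
    using True total_pos sum_P_union sum_P_nonneg[of A] by (auto simp: wvec_def)
next
  case False
  then show ?thesis using P_eq_0_if_not_sum_pos[of B] assms sum_P_nonneg[of B] by simp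
qed

lemma total_le_primal_optimum:
  assumes "primal_optimal E (A \<union> B) (wvec A B P) y"
  shows "sum P (A \<union> B) \<le> primal_obj (A \<union> B) (wvec A B P) y"
proof (cases "0 < sum P A")
  case True
  then have "primal_obj (A \<union> B) (wvec A B P) (\<lambda>v. if v \<in> A then 1 else 0) = sum P (A \<union> B)"
    using finite_A finite_B sum_wvec_A by (subst primal_obj_indicator) auto
  then show ?thesis using assms primal_feasible_indicator_A unfolding primal_optimal_def by metis
next
  case False
  then have "0 < sum P B" using total_pos sum_P_union by simp
  then have "primal_obj (A \<union> B) (wvec A B P) (\<lambda>v. if v \<in> B then 1 else 0) = sum P (A \<union> B)"
    using finite_A finite_B sum_wvec_B by (subst primal_obj_indicator) auto
  then show ?thesis using assms primal_feasible_indicator_B unfolding primal_optimal_def by metis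
qed

lemma primal_excess_eq:
  assumes "Ap \<subseteq> A" "Bp \<subseteq> B" "0 < sum P A" "0 < sum P B"
  shows "sum (wvec A B P) Ap + sum (wvec A B P) Bp - sum P (A \<union> B)
    = sum P (A \<union> B) / (sum P A * sum P B) * (sum P Ap * sum P Bp - sum P (A - Ap) * sum P (B - Bp))"
proof -
  have "sum P (A - Ap) = sum P A - sum P Ap" "sum P (B - Bp) = sum P B - sum P Bp"
    using assms finite_A finite_B by (simp_all add: sum_diff finite_subset)
  moreover note sum_wvec_subset_A[OF assms(1,3,4)] sum_wvec_subset_B[OF assms(2-4)] sum_P_union
  ultimately show ?thesis
    using assms(3,4) by (simp only:) (simp add: field_simps)
qed

lemma optimal_zero_one_products:
  assumes opt: "primal_optimal E (A \<union> B) (wvec A B P) y"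
    and zero_one: "\<forall>v\<in>A \<union> B. y v = 0 \<or> y v = 1"
    and Ap: "Ap = {v\<in>A. y v = 1}" and Bp: "Bp = {v\<in>B. y v = 1}"
  shows "sum P (A - Ap) * sum P (B - Bp) \<le> sum P Ap * sum P Bp"
    and "sum P Ap * sum P Bp = sum P (A - Ap) * sum P (B - Bp) \<Longrightarrow>
      primal_obj (A \<union> B) (wvec A B P) y = sum P (A \<union> B)"
proof -
  have obj: "primal_obj (A \<union> B) (wvec A B P) y = sum (wvec A B P) Ap + sum (wvec A B P) Bp"
    using primal_obj_zero_one[OF zero_one] Ap Bp by simp
  have ge: "sum P (A \<union> B) \<le> primal_obj (A \<union> B) (wvec A B P) y"
    by (rule total_le_primal_optimum[OF opt])
  have subsets: "Ap \<subseteq> A" "Bp \<subseteq> B" using Ap Bp by auto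
  have nonneg: "0 \<le> sum P Ap" "0 \<le> sum P Bp" "0 \<le> sum P (A - Ap)" "0 \<le> sum P (B - Bp)"
    using subsets by (auto intro: sum_P_nonneg)
  have "sum P (A - Ap) * sum P (B - Bp) \<le> sum P Ap * sum P Bp \<and>
    (sum P Ap * sum P Bp = sum P (A - Ap) * sum P (B - Bp) \<longrightarrow>
      primal_obj (A \<union> B) (wvec A B P) y = sum P (A \<union> B))"
  proof (cases "0 < sum P A \<and> 0 < sum P B")
    case True
    have "0 < sum P (A \<union> B) / (sum P A * sum P B)" using True total_pos by simp
    then show ?thesis
      using primal_excess_eq[OF subsets] True obj ge
      by (smt (verit, best) mult_pos_neg zero_less_mult_iff)
  next
    case False
    then have degenerate: "wvec A B P = P" by (auto simp: wvec_def)
    have "sum P (A - Ap) = 0 \<or> sum P (B - Bp) = 0"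
      using False sum_mono2[OF finite_A, of "A - Ap" P] sum_mono2[OF finite_B, of "B - Bp" P]
        P_nonneg nonneg sum_P_nonneg[of A] sum_P_nonneg[of B] by auto
    moreover have "sum P Ap + sum P Bp \<le> sum P (A \<union> B)"
      using sum_P_union subsets finite_A finite_B P_nonneg
        sum_mono2[OF finite_A subsets(1), of P] sum_mono2[OF finite_B subsets(2), of P] by auto
    ultimately show ?thesis using obj ge degenerate nonneg by auto
  qed
  then show "sum P (A - Ap) * sum P (B - Bp) \<le> sum P Ap * sum P Bp"
    and "sum P Ap * sum P Bp = sum P (A - Ap) * sum P (B - Bp) \<Longrightarrow>
      primal_obj (A \<union> B) (wvec A B P) y = sum P (A \<union> B)" by auto
qed

lemma dual_optimum_eq_total:
  assumes opt: "primal_optimal E (A \<union> B) (wvec A B P) y"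
    and tight: "primal_obj (A \<union> B) (wvec A B P) y = sum P (A \<union> B)"
    and z: "dual_optimal E (A \<union> B) (wvec A B P) z"
  shows "dual_obj E (A \<union> B) z = sum P (A \<union> B)"
proof -
  have "\<exists>z'. dual_feasible E (A \<union> B) (wvec A B P) z' \<and> dual_obj E (A \<union> B) z' = sum P (A \<union> B)"
  proof (cases "0 < sum P A \<and> 0 < sum P B")
    case True
    then show ?thesis
      using dual_attaining_primal_bound[of "wvec A B P"] wvec_nonneg sum_wvec_A sum_wvec_B opt tight
      unfolding primal_optimal_def by simp
  next
    case False
    then have degenerate: "wvec A B P = P" by (auto simp: wvec_def)
    have "dual_feasible E (A \<union> B) P (case_sum (\<lambda>_. 0) P)"
      using P_nonneg finite_A finite_B by (auto simp: dual_feasible_def MTvec_eq)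
    moreover have "dual_obj E (A \<union> B) (case_sum (\<lambda>_. 0) P) = sum P (A \<union> B)"
      by (simp add: dual_obj_def)
    ultimately show ?thesis using degenerate by auto
  qed
  then have "dual_obj E (A \<union> B) z \<le> sum P (A \<union> B)" using z unfolding dual_optimal_def by auto
  moreover have "primal_obj (A \<union> B) (wvec A B P) y \<le> dual_obj E (A \<union> B) z"
    using opt z finite_A finite_B unfolding primal_optimal_def dual_optimal_def
    by (intro weak_duality) auto
  ultimately show ?thesis using tight by linarith
qed

lemma scaled_MTvec_A:
  assumes z: "dual_feasible E (A \<union> B) (wvec A B P) z" "dual_obj E (A \<union> B) z = sum P (A \<union> B)"
    and "v \<in> A"
  shows "sum P A / sum P (A \<union> B) * MTvec E (A \<union> B) z v = P v"
proof (cases "0 < sum P A")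
  case True
  have "primal_obj (A \<union> B) (wvec A B P) (\<lambda>v. if v \<in> A then 1 else 0) = sum P (A \<union> B)"
    using True finite_A finite_B sum_wvec_A by (subst primal_obj_indicator) auto
  then have "MTvec E (A \<union> B) z v = wvec A B P v"
    using finite_A finite_B \<open>v \<in> A\<close> z
    by (intro complementary_slackness[OF _ primal_feasible_indicator_A]) auto
  then show ?thesis using scaled_wvec_A[OF \<open>v \<in> A\<close>] by simp
next
  case False
  then have "sum P A = 0" using sum_P_nonneg[of A] by simp
  then show ?thesis using scaled_wvec_A[OF \<open>v \<in> A\<close>] by simp
qed

lemma scaled_MTvec_B:
  assumes z: "dual_feasible E (A \<union> B) (wvec A B P) z" "dual_obj E (A \<union> B) z = sum P (A \<union> B)"
    and "v \<in> B"
  shows "sum P B / sum P (A \<union> B) * MTvec E (A \<union> B) z v = P v"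
proof (cases "0 < sum P B")
  case True
  have "primal_obj (A \<union> B) (wvec A B P) (\<lambda>v. if v \<in> B then 1 else 0) = sum P (A \<union> B)"
    using True finite_A finite_B sum_wvec_B by (subst primal_obj_indicator) auto
  then have "MTvec E (A \<union> B) z v = wvec A B P v"
    using finite_A finite_B \<open>v \<in> B\<close> z
    by (intro complementary_slackness[OF _ primal_feasible_indicator_B]) auto
  then show ?thesis using scaled_wvec_B[OF \<open>v \<in> B\<close>] by simp
next
  case False
  then have "sum P B = 0" using sum_P_nonneg[of B] by simp
  then show ?thesis using scaled_wvec_B[OF \<open>v \<in> B\<close>] by simp
qed

end

theorem lemma4:
  fixes A B :: "'v set" and E :: "('v \<times> 'v) set" and P :: "'v \<Rightarrow> real"
    and Ap Am Bp Bm :: "'v set" and z :: "('v \<times> 'v) + 'v \<Rightarrow> real"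
  assumes "finite A" and "finite B" and "A \<inter> B = {}" and "E \<subseteq> A \<times> B"
    and "\<forall>v\<in>A \<union> B. P v \<ge> 0"
    and "sum P (A \<union> B) > 0"
    and "LinOpt_output A B E P Ap Am Bp Bm z"
  shows "sum P Ap * sum P Bp \<ge> sum P Am * sum P Bm \<and>
         (sum P Ap * sum P Bp = sum P Am * sum P Bm \<longrightarrow>
           dual_obj E (A \<union> B) z = sum P (A \<union> B) \<and>
           (\<forall>v\<in>A. sum P A / sum P (A \<union> B) * MTvec E (A \<union> B) z v = P v) \<and>
           (\<forall>v\<in>B. sum P B / sum P (A \<union> B) * MTvec E (A \<union> B) z v = P v))"
proof -
  interpret weighted_bipartite_graph A B E P
    using assms(1-6) by unfold_locales auto
  obtain y where zero_one: "\<forall>v\<in>A \<union> B. y v = 0 \<or> y v = 1"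
    and y: "primal_optimal E (A \<union> B) (wvec A B P) y" and z: "dual_optimal E (A \<union> B) (wvec A B P) z"
    and Ap: "Ap = {v\<in>A. y v = 1}" and "Am = A - Ap"
    and Bp: "Bp = {v\<in>B. y v = 1}" and "Bm = B - Bp"
    using assms(7) unfolding LinOpt_output_def by blast
  note products = optimal_zero_one_products[OF y zero_one Ap Bp]
  have "dual_obj E (A \<union> B) z = sum P (A \<union> B) \<and>
      (\<forall>v\<in>A. sum P A / sum P (A \<union> B) * MTvec E (A \<union> B) z v = P v) \<and>
      (\<forall>v\<in>B. sum P B / sum P (A \<union> B) * MTvec E (A \<union> B) z v = P v)"
    if "sum P Ap * sum P Bp = sum P Am * sum P Bm"
  proof -
    have "dual_obj E (A \<union> B) z = sum P (A \<union> B)"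
      using dual_optimum_eq_total[OF y _ z] products(2) that \<open>Am = A - Ap\<close> \<open>Bm = B - Bp\<close> by simp
    moreover have "dual_feasible E (A \<union> B) (wvec A B P) z" using z by (simp add: dual_optimal_def)
    ultimately show ?thesis using scaled_MTvec_A scaled_MTvec_B by blast
  qed
  then show ?thesis using products(1) \<open>Am = A - Ap\<close> \<open>Bm = B - Bp\<close> by auto
qed

end
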